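(* Let $R(m,n)$ be a rectangular supergrid graph with $m\ge 3$ and $n\ge 2$, and let $s=w=(1,1)$, $t=z=(2,1)$ and $f=(3,1)$. Then there exists a Hamiltonian $(s,t)$-path $P$ of $R(m,n)$ such that the edge $(z,f)$ belongs to $P$.
   Context: The rectangular supergrid graph $R(m,n)$ has vertex set $\{(x,y)\in\mathbb{Z}^2:1\le x\le m,\ 1\le y\le n\}$, two distinct vertices $u,v$ being adjacent iff $|u_x-v_x|\le 1$ and $|u_y-v_y|\le 1$. A Hamiltonian $(s,t)$-path is a simple path from $s$ to $t$ visiting every vertex exactly once. *)

theory Defs
  imports Main
begin

definition supergrid_vertices :: "int \<Rightarrow> int \<Rightarrow> (int \<times> int) set" where
  "supergrid_vertices m n = {(x, y). 1 \<le> x \<and> x \<le> m \<and> 1 \<le> y \<and> y \<le> n}"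

definition supergrid_adj :: "int \<Rightarrow> int \<Rightarrow> int \<times> int \<Rightarrow> int \<times> int \<Rightarrow> bool" where
  "supergrid_adj m n u v \<longleftrightarrow> u \<in> supergrid_vertices m n \<and> v \<in> supergrid_vertices m n \<and>
     u \<noteq> v \<and> \<bar>fst u - fst v\<bar> \<le> 1 \<and> \<bar>snd u - snd v\<bar> \<le> 1"

definition hamiltonian_path :: "int \<Rightarrow> int \<Rightarrow> int \<times> int \<Rightarrow> int \<times> int \<Rightarrow> (int \<times> int) list \<Rightarrow> bool" where
  "hamiltonian_path m n s t P \<longleftrightarrow> P \<noteq> [] \<and> hd P = s \<and> last P = t \<and> distinct P \<and>
     set P = supergrid_vertices m n \<and>
     (\<forall>i. Suc i < length P \<longrightarrow> supergrid_adj m n (P ! i) (P ! Suc i))"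

definition edge_on_path :: "(int \<times> int) list \<Rightarrow> int \<times> int \<Rightarrow> int \<times> int \<Rightarrow> bool" where
  "edge_on_path P u v \<longleftrightarrow> (\<exists>i. Suc i < length P \<and>
     ((P ! i = u \<and> P ! Suc i = v) \<or> (P ! i = v \<and> P ! Suc i = u)))"

end

theory Submission
  imports Defs
begin

(* Two new columns can be spliced into a path at an edge (b,n)-(b,n-1): leave (b,n) to the right,
  run down column b+2, come back up column b+1 and re-enter at (b,n-1); the widened path again has
  such an edge, on column b+2. Starting from blocks of width 1 and 2, this yields for the columns
  3..m a Hamiltonian path from (3,n) to (3,1). Prefixing (1,1) and a zigzag through columns 1 and 2
  up to (2,n), and appending (2,1), gives the required path; its last edge is (3,1)-(2,1). *)

definition king_adj :: "int \<times> int \<Rightarrow> int \<times> int \<Rightarrow> bool" where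
  "king_adj u v \<longleftrightarrow> u \<noteq> v \<and> \<bar>fst u - fst v\<bar> \<le> 1 \<and> \<bar>snd u - snd v\<bar> \<le> 1"

lemma king_adj_commute: "king_adj u v \<longleftrightarrow> king_adj v u"
  unfolding king_adj_def by auto

lemma successively_king_adj_rev [simp]:
  "successively king_adj (rev xs) \<longleftrightarrow> successively king_adj xs"
  by (simp add: successively_rev king_adj_commute)

lemma hamiltonian_path_iff:
  "hamiltonian_path m n s t P \<longleftrightarrow> P \<noteq> [] \<and> hd P = s \<and> last P = t \<and> distinct P \<and>
     set P = supergrid_vertices m n \<and> successively king_adj P"
proof -
  have "set P = supergrid_vertices m n \<Longrightarrow>
    (\<forall>i. Suc i < length P \<longrightarrow> supergrid_adj m n (P ! i) (P ! Suc i)) \<longleftrightarrow> successively king_adj P"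
    unfolding successively_conv_nth supergrid_adj_def king_adj_def
    by (metis Suc_lessD nth_mem)
  thus ?thesis unfolding hamiltonian_path_def by blast
qed

lemma supergrid_vertices_eq: "supergrid_vertices m n = {1..m} \<times> {1..n}"
  unfolding supergrid_vertices_def by auto

lemma hamiltonian_pathI:
  assumes "set P = supergrid_vertices m n" and "length P = nat m * nat n"
    and "successively king_adj P" and "P \<noteq> []" and "hd P = s" and "last P = t"
  shows "hamiltonian_path m n s t P"
proof -
  have "card (set P) = length P"
    using assms(1,2) by (simp add: supergrid_vertices_eq card_cartesian_product)
  thus ?thesis using assms by (simp add: hamiltonian_path_iff card_distinct)
qed

lemma edge_on_path_snoc: "edge_on_path (xs @ [u, v]) v u"
  unfolding edge_on_path_def by (rule exI[of _ "length xs"]) (simp add: nth_append)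

lemma successively_insert_between:
  assumes "successively R (xs @ u # v # ys)" and "successively R (u # B @ [v])"
  shows "successively R (xs @ u # B @ v # ys)"
proof -
  have "successively R (xs @ [u])" "successively R (v # ys)"
    using assms(1) successively_append_iff[of R "xs @ [u]" "v # ys"] by auto
  moreover from this(1) have "successively R ((xs @ [u]) @ (B @ [v]))"
    using assms(2) by (cases B) (auto simp: successively_append_iff successively_Cons)
  ultimately have "successively R ((xs @ u # B @ [v]) @ ys)"
    using successively_append_iff[of R "xs @ u # B @ [v]" ys]
    by (cases ys) (auto simp: successively_Cons)
  thus ?thesis by simp
qed

fun column :: "int \<Rightarrow> int \<Rightarrow> nat \<Rightarrow> (int \<times> int) list" where
  "column a y 0 = []"
| "column a y (Suc k) = (a, y) # column a (y + 1) k"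

fun zigzag :: "int \<Rightarrow> int \<Rightarrow> nat \<Rightarrow> (int \<times> int) list" where
  "zigzag a y 0 = []"
| "zigzag a y (Suc k) = (a, y) # (a + 1, y) # zigzag a (y + 1) k"

lemma length_column [simp]: "length (column a y k) = k"
  by (induction k arbitrary: y) auto

lemma length_zigzag [simp]: "length (zigzag a y k) = 2 * k"
  by (induction k arbitrary: y) auto

lemma mem_set_column:
  "(x, z) \<in> set (column a y k) \<longleftrightarrow> x = a \<and> y \<le> z \<and> z < y + int k"
  by (induction k arbitrary: y) (simp_all, linarith)

lemma mem_set_zigzag:
  "(x, z) \<in> set (zigzag a y k) \<longleftrightarrow> (x = a \<or> x = a + 1) \<and> y \<le> z \<and> z < y + int k"
  by (induction k arbitrary: y) (simp_all, linarith)

lemma hd_column: "column a y k \<noteq> [] \<Longrightarrow> hd (column a y k) = (a, y)"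
  by (cases k) auto

lemma hd_zigzag: "zigzag a y k \<noteq> [] \<Longrightarrow> hd (zigzag a y k) = (a, y)"
  by (cases k) auto

lemma column_add: "column a y (k + l) = column a y k @ column a (y + int k) l"
  by (induction k arbitrary: y) (simp_all add: algebra_simps)

lemma zigzag_add: "zigzag a y (k + l) = zigzag a y k @ zigzag a (y + int k) l"
  by (induction k arbitrary: y) (simp_all add: algebra_simps)

lemma column_Suc_snoc: "column a y (Suc k) = column a y k @ [(a, y + int k)]"
  using column_add[of a y k 1] by simp

lemma last_column_Suc: "last (column a y (Suc k)) = (a, y + int k)"
  by (simp only: column_Suc_snoc last_snoc)

lemma rev_column_Suc_Suc:
  "rev (column a y (Suc (Suc k))) = (a, y + int k + 1) # (a, y + int k) # rev (column a y k)"
  by (simp only: column_Suc_snoc rev_append) (simp add: algebra_simps)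

lemma zigzag_Suc_snoc:
  "zigzag a y (Suc k) = zigzag a y k @ [(a, y + int k), (a + 1, y + int k)]"
  using zigzag_add[of a y k 1] by simp

lemma last_zigzag_Suc: "last (zigzag a y (Suc k)) = (a + 1, y + int k)"
  by (simp only: zigzag_Suc_snoc) simp

lemma rev_zigzag_Suc:
  "rev (zigzag a y (Suc k)) = (a + 1, y + int k) # (a, y + int k) # rev (zigzag a y k)"
  by (simp only: zigzag_Suc_snoc rev_append) simp

lemma successively_column: "successively king_adj (column a y k)"
  by (induction k arbitrary: y) (auto simp: successively_Cons king_adj_def hd_column)

lemma successively_zigzag: "successively king_adj (zigzag a y k)"
  by (induction k arbitrary: y) (auto simp: successively_Cons king_adj_def hd_zigzag)

text \<open>The last conjunct marks the edge into which the next two columns are spliced.\<close>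
definition block_path :: "int \<Rightarrow> int \<Rightarrow> int \<Rightarrow> (int \<times> int) list \<Rightarrow> bool" where
  "block_path a b n R \<longleftrightarrow> set R = {a..b} \<times> {1..n} \<and> length R = nat (b - a + 1) * nat n \<and>
     successively king_adj R \<and> hd R = (a, n) \<and> last R = (a, 1) \<and>
     (\<exists>xs ys. R = xs @ (b, n) # (b, n - 1) # ys)"

lemma block_path_single_column:
  assumes n: "n = int k + 2"
  shows "block_path a a n (rev (column a 1 (Suc (Suc k))))"
  (is "block_path a a n ?R")
proof -
  have R: "?R = (a, n) # (a, n - 1) # rev (column a 1 k)"
    using n by (simp add: rev_column_Suc_Suc del: column.simps)
  have "set ?R = {a..a} \<times> {1..n}"
    using n by (auto simp: mem_set_column)
  moreover have "length ?R = nat (a - a + 1) * nat n"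
    using n by (simp add: nat_add_distrib)
  moreover have "last ?R = (a, 1)"
    by (simp add: last_rev)
  ultimately show ?thesis
    unfolding block_path_def using R successively_column[of a 1 "Suc (Suc k)"]
    by (metis append_Nil list.sel(1) successively_king_adj_rev)
qed

lemma block_path_two_columns:
  assumes n: "n = int k + 2"
  shows "block_path a (a + 1) n ((a, n) # (a + 1, n) # rev (zigzag a 1 (Suc k)))"
  (is "block_path a (a + 1) n ?R")
proof -
  have zigzag: "rev (zigzag a 1 (Suc k)) = (a + 1, n - 1) # (a, n - 1) # rev (zigzag a 1 k)"
    using n by (simp add: rev_zigzag_Suc del: zigzag.simps)
  have "set ?R = {a..a + 1} \<times> {1..n}"
    using n by (auto simp: mem_set_zigzag)
  moreover have "length ?R = nat (a + 1 - a + 1) * nat n"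
    using n by (simp add: nat_add_distrib)
  moreover have "successively king_adj ?R"
  proof -
    have "successively king_adj ((a + 1, n - 1) # (a, n - 1) # rev (zigzag a 1 k))"
      using successively_zigzag[of a 1 "Suc k"]
      by (simp only: zigzag[symmetric] successively_king_adj_rev)
    moreover have "king_adj (a, n) (a + 1, n)" "king_adj (a + 1, n) (a + 1, n - 1)"
      by (simp_all add: king_adj_def)
    ultimately show ?thesis unfolding zigzag by (simp only: successively.simps(3) simp_thms)
  qed
  moreover have "last ?R = (a, 1)"
    by (simp add: last_rev)
  moreover have "\<exists>xs ys. ?R = xs @ (a + 1, n) # (a + 1, n - 1) # ys"
    unfolding zigzag by (rule exI[of _ "[(a, n)]"]) simp
  ultimately show ?thesis
    unfolding block_path_def by (metis list.sel(1))
qed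

lemma block_path_widen:
  assumes R: "block_path a b n R" and n: "n = int k + 2"
  shows "\<exists>R'. block_path a (b + 2) n R'"
proof -
  obtain xs ys where split: "R = xs @ (b, n) # (b, n - 1) # ys"
    using R unfolding block_path_def by blast
  have "(b, n) \<in> set R" unfolding split by simp
  hence "a \<le> b" using R unfolding block_path_def by auto
  define C where "C = rev (column (b + 2) 1 (Suc (Suc k)))"
  define B where "B = (b + 1, n) # C @ column (b + 1) 1 (Suc k)"
  define R' where "R' = xs @ (b, n) # B @ (b, n - 1) # ys"
  have C: "C = (b + 2, n) # (b + 2, n - 1) # rev (column (b + 2) 1 k)"
    unfolding C_def using n by (simp add: rev_column_Suc_Suc del: column.simps)
  have "set B = {b + 1..b + 2} \<times> {1..n}"
    unfolding B_def C_def using n by (auto simp: mem_set_column simp del: column.simps)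
  moreover have "set R' = set R \<union> set B" unfolding R'_def split by auto
  ultimately have "set R' = {a..b} \<times> {1..n} \<union> {b + 1..b + 2} \<times> {1..n}"
    using R unfolding block_path_def by simp
  also have "\<dots> = {a..b + 2} \<times> {1..n}"
    using \<open>a \<le> b\<close> by auto
  finally have "set R' = {a..b + 2} \<times> {1..n}" .
  moreover have "length R' = nat (b + 2 - a + 1) * nat n"
  proof -
    have "length R' = length R + 2 * nat n"
      unfolding R'_def B_def C_def split using n by simp
    moreover have "nat (b + 2 - a + 1) = nat (b - a + 1) + 2"
      using \<open>a \<le> b\<close> by simp
    ultimately show ?thesis
      using R unfolding block_path_def by (simp add: algebra_simps)
  qed
  moreover have "successively king_adj R'"
  proof -
    define D where "D = column (b + 1) 1 (Suc k)"
    have "hd C = (b + 2, n)" unfolding C by simp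
    moreover have "last C = (b + 2, 1)" unfolding C_def by (simp add: last_rev)
    moreover have "successively king_adj C"
      unfolding C_def by (simp only: successively_king_adj_rev successively_column)
    moreover have "hd D = (b + 1, 1)" unfolding D_def by simp
    moreover have "last D = (b + 1, n - 1)"
      unfolding D_def using n by (simp add: last_column_Suc del: column.simps)
    moreover have "successively king_adj D" unfolding D_def by (rule successively_column)
    moreover have "king_adj (b, n) (b + 1, n)" "king_adj (b + 1, n) (b + 2, n)"
      "king_adj (b + 2, 1) (b + 1, 1)" "king_adj (b + 1, n - 1) (b, n - 1)"
      by (simp_all add: king_adj_def)
    moreover have "C \<noteq> []" "D \<noteq> []" unfolding C D_def by simp_all
    ultimately have "successively king_adj ((b, n) # B @ [(b, n - 1)])"
      unfolding B_def D_def[symmetric] by (simp add: successively_append_iff successively_Cons)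
    moreover have "successively king_adj (xs @ (b, n) # (b, n - 1) # ys)"
      using R unfolding block_path_def split by blast
    ultimately show ?thesis
      unfolding R'_def by (rule successively_insert_between[rotated])
  qed
  moreover have "hd R' = (a, n)" and "last R' = (a, 1)"
    using R unfolding R'_def block_path_def split by (cases xs; simp)+
  moreover have "R' = (xs @ [(b, n), (b + 1, n)]) @ (b + 2, n) # (b + 2, n - 1) #
      (rev (column (b + 2) 1 k) @ column (b + 1) 1 (Suc k) @ (b, n - 1) # ys)"
    unfolding R'_def B_def C by simp
  ultimately have "block_path a (b + 2) n R'"
    unfolding block_path_def by (metis add.commute)
  thus ?thesis ..
qed

lemma block_path_exists:
  assumes "a \<le> b" and n: "n = int k + 2"
  shows "\<exists>R. block_path a b n R"
  using assms(1)
proof (induction "nat (b - a)" arbitrary: b rule: less_induct)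
  case less
  consider "b = a" | "b = a + 1" | "a \<le> b - 2" using less.prems by linarith
  then show ?case
  proof cases
    case 1
    thus ?thesis using block_path_single_column[OF n] by blast
  next
    case 2
    thus ?thesis using block_path_two_columns[OF n] by blast
  next
    case 3
    then obtain R where "block_path a (b - 2) n R" using less.hyps[of "b - 2"] by auto
    from block_path_widen[OF this n] show ?thesis by simp
  qed
qed

lemma hamiltonian_path_through_block:
  assumes R: "block_path 3 m n R" and n: "n = int k + 2"
  shows "hamiltonian_path m n (1, 1) (2, 1) ((1, 1) # zigzag 1 2 (Suc k) @ R @ [(2, 1)])"
    (is "hamiltonian_path m n _ _ ?P")
proof (rule hamiltonian_pathI)
  obtain xs ys where "R = xs @ (m, n) # (m, n - 1) # ys"
    using R unfolding block_path_def by blast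
  hence "(m, n) \<in> set R" by simp
  hence m: "3 \<le> m" using R unfolding block_path_def by auto
  show "set ?P = supergrid_vertices m n"
    using R n m unfolding block_path_def supergrid_vertices_def
    by (auto simp: mem_set_zigzag simp del: zigzag.simps)
  have "nat m = nat (m - 3 + 1) + 2" using m by simp
  thus "length ?P = nat m * nat n"
    using R n unfolding block_path_def by (simp add: algebra_simps)
  define Z where "Z = zigzag 1 2 (Suc k)"
  have "Z \<noteq> []" "hd Z = (1, 2)" "successively king_adj Z"
    unfolding Z_def by (simp_all only: successively_zigzag) simp_all
  moreover have "last Z = (2, n)"
    unfolding Z_def using n by (simp add: last_zigzag_Suc del: zigzag.simps)
  moreover have "R \<noteq> []" "hd R = (3, n)" "last R = (3, 1)" "successively king_adj R"
    using R unfolding block_path_def by auto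
  moreover have "king_adj (1, 1) (1, 2)" "king_adj (2, n) (3, n)" "king_adj (3, 1) (2, 1)"
    by (simp_all add: king_adj_def)
  ultimately show "successively king_adj ?P"
    unfolding Z_def[symmetric] by (simp add: successively_append_iff successively_Cons)
qed simp_all

theorem lemma4:
  fixes m n :: int
  assumes "m \<ge> 3" and "n \<ge> 2"
  shows "\<exists>P. hamiltonian_path m n (1, 1) (2, 1) P \<and> edge_on_path P (2, 1) (3, 1)"
proof -
  define k where "k = nat (n - 2)"
  have n: "n = int k + 2"
    using assms(2) by (simp add: k_def)
  obtain R where R: "block_path 3 m n R"
    using block_path_exists[OF assms(1) n] by blast
  have "R \<noteq> []" "last R = (3, 1)"
    using R unfolding block_path_def by auto
  then obtain R0 where "R = R0 @ [(3, 1)]"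
    by (metis append_butlast_last_id)
  hence "(1, 1) # zigzag 1 2 (Suc k) @ R @ [(2, 1)]
      = ((1, 1) # zigzag 1 2 (Suc k) @ R0) @ [(3, 1), (2, 1)]"
    by simp
  thus ?thesis
    using hamiltonian_path_through_block[OF R n] edge_on_path_snoc by metis
qed

end
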